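(* Let $N$ be a positive integer and $A$ an $N$-complementable flat layout. If $B$ is a flat layout that is an $N$-complement of $A$, is coalesced, and is sorted, then $B=\mathrm{comp}^\flat(A,N)$.
   Context: A flat layout $L=(s_1,\dots,s_m):(d_1,\dots,d_m)$ has positive integer shape entries and nonnegative integer stride entries, modes $s_i:d_i$; $\mathrm{size}(L)=\prod s_i$, $\mathrm{cosize}(L)=1+\sum(s_i-1)d_i$; layout function $\Phi_L(x)=\sum x_id_i$, $x_i=\lfloor x/(s_1\cdots s_{i-1})\rfloor\bmod s_i$, on $[0,\mathrm{size}(L))$. $L$ is compact if $\Phi_L:[0,\mathrm{size}(L))\to[0,\mathrm{cosize}(L))$ is bijective. $A\star B$ is concatenation of shapes and of strides; $B$ is an $N$-complement of $A$ if $A\star B$ is compact and $\mathrm{size}(A)\mathrm{size}(B)=N$. $L$ is coalesced if no $s_i=1$ and $s_id_i\ne d_{i+1}$ for $1\le i<m$. Order pairs by $s:d\preceq s':d'$ iff $d<d'$ or ($d=d'$ and $s\le s'$); $L$ is sorted if its modes are $\preceq$-nondecreasing, and $\mathrm{sort}(L)$ stably reorders the modes into this order. $\mathrm{squeeze}(L)$ removes modes with $s_i=1$; $\mathrm{coal}^\flat(L)$ is obtained from $\mathrm{squeeze}(L)$ by repeatedly replacing adjacent modes $s_i,s_{i+1}:d_i,d_{i+1}$ with $d_{i+1}=s_id_i$ by $s_is_{i+1}:d_i$. $A$ is $N$-complementable if, writing $\mathrm{sort}(\mathrm{squeeze}(A))=(s_1,\dots,s_m):(d_1,\dots,d_m)$,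 $s_id_i\mid d_{i+1}$ for $1\le i<m$ and $s_md_m\mid N$; then $\mathrm{comp}^\flat(A,N)=\mathrm{coal}^\flat(C)$ with $C=\bigl(d_1,\tfrac{d_2}{s_1d_1},\tfrac{d_3}{s_2d_2},\dots,\tfrac{N}{s_md_m}\bigr):(1,s_1d_1,s_2d_2,\dots,s_md_m)$. *)

theory Defs
  imports Main "HOL-Library.Product_Lexorder"
begin

text \<open>A flat layout is a list of modes (s, d) = shape : stride, with s > 0.\<close>
type_synonym layout = "(nat \<times> nat) list"

definition flat_layout :: "layout \<Rightarrow> bool" where
  "flat_layout L \<longleftrightarrow> (\<forall>(s, d) \<in> set L. 0 < s)"

definition lsize :: "layout \<Rightarrow> nat" where
  "lsize L = prod_list (map fst L)"

definition lcosize :: "layout \<Rightarrow> nat" where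
  "lcosize L = 1 + sum_list (map (\<lambda>(s, d). (s - 1) * d) L)"

definition coord :: "layout \<Rightarrow> nat \<Rightarrow> nat \<Rightarrow> nat" where
  "coord L x i = (x div prod_list (map fst (take i L))) mod fst (L ! i)"

definition layout_fun :: "layout \<Rightarrow> nat \<Rightarrow> nat" where
  "layout_fun L x = (\<Sum>i<length L. coord L x i * snd (L ! i))"

definition compact :: "layout \<Rightarrow> bool" where
  "compact L \<longleftrightarrow> bij_betw (layout_fun L) {0..<lsize L} {0..<lcosize L}"

text \<open>B is an N-complement of A (concatenation A \<star> B is list append).\<close>
definition is_complement :: "nat \<Rightarrow> layout \<Rightarrow> layout \<Rightarrow> bool" where
  "is_complement N A B \<longleftrightarrow> compact (A @ B) \<and> lsize A * lsize B = N"

definition coalesced :: "layout \<Rightarrow> bool" where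
  "coalesced L \<longleftrightarrow> (\<forall>i < length L. fst (L ! i) \<noteq> 1) \<and>
     (\<forall>i. Suc i < length L \<longrightarrow> fst (L ! i) * snd (L ! i) \<noteq> snd (L ! Suc i))"

definition mode_le :: "nat \<times> nat \<Rightarrow> nat \<times> nat \<Rightarrow> bool" where
  "mode_le m m' \<longleftrightarrow> snd m < snd m' \<or> (snd m = snd m' \<and> fst m \<le> fst m')"

definition sorted_layout :: "layout \<Rightarrow> bool" where
  "sorted_layout L \<longleftrightarrow> (\<forall>i. Suc i < length L \<longrightarrow> mode_le (L ! i) (L ! Suc i))"

definition sort_layout :: "layout \<Rightarrow> layout" where
  "sort_layout L = sort_key (\<lambda>(s, d). (d, s)) L"

definition squeeze :: "layout \<Rightarrow> layout" where
  "squeeze L = filter (\<lambda>(s, d). s \<noteq> 1) L"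

fun merge_modes :: "layout \<Rightarrow> layout" where
  "merge_modes [] = []"
| "merge_modes [m] = [m]"
| "merge_modes ((s1, d1) # (s2, d2) # rest) =
     (if d2 = s1 * d1 then merge_modes ((s1 * s2, d1) # rest)
      else (s1, d1) # merge_modes ((s2, d2) # rest))"

definition coal_flat :: "layout \<Rightarrow> layout" where
  "coal_flat L = merge_modes (squeeze L)"

definition complementable :: "nat \<Rightarrow> layout \<Rightarrow> bool" where
  "complementable N A \<longleftrightarrow>
     (let S = sort_layout (squeeze A) in
        (\<forall>i. Suc i < length S \<longrightarrow> fst (S ! i) * snd (S ! i) dvd snd (S ! Suc i)) \<and>
        (S \<noteq> [] \<longrightarrow> fst (last S) * snd (last S) dvd N))"

text \<open>C = (d_1, d_2/(s_1 d_1), ..., N/(s_m d_m)) : (1, s_1 d_1, ..., s_m d_m).\<close>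
definition comp_C :: "nat \<Rightarrow> layout \<Rightarrow> layout" where
  "comp_C N A =
     (let S = sort_layout (squeeze A);
          strides = 1 # map (\<lambda>(s, d). s * d) S;
          nums = map snd S @ [N]
      in map2 (\<lambda>a b. (a div b, b)) nums strides)"

definition comp_flat :: "layout \<Rightarrow> nat \<Rightarrow> layout" where
  "comp_flat A N = coal_flat (comp_C N A)"

end

theory Submission
  imports Defs "HOL-Library.Multiset"
begin

(* Merge the modes of A (without its shape-1 modes) and those of B into one list L sorted by
   stride. Compactness of A @ B says that the offsets \<Sum> a\<^sub>i d\<^sub>i with a\<^sub>i < s\<^sub>i enumerate
   [0, N) exactly once, and this does not depend on the order of the modes. If the offsets of a
   sorted layout enumerate k [0, n) exactly once, its smallest stride is k (the least nonzero
   offset), and the offsets k T of the remaining modes satisfy [0, s) \<oplus> T = [0, n), which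
   forces T = s [0, n / s). Hence the strides of L are 1, s\<^sub>1, s\<^sub>1 s\<^sub>2, ....
   In this chain the modes of B lying between two consecutive modes of A (or after the last one)
   could be merged, so as B is sorted and coalesced there is at most one of them. It is then the
   corresponding mode of the list C defining comp_flat A N, while an empty gap is a mode of shape 1
   of C, which squeezing removes. *)

lemma layout_fun_Nil [simp]: "layout_fun [] x = 0"
  by (simp add: layout_fun_def)

lemma layout_fun_Cons [simp]:
  "layout_fun ((s, d) # L) x = x mod s * d + layout_fun L (x div s)"
proof -
  have "coord ((s, d) # L) x (Suc i) = coord L (x div s) i" for i
    by (simp add: coord_def div_mult2_eq)
  moreover have "coord ((s, d) # L) x 0 = x mod s"
    by (simp add: coord_def)
  ultimately show ?thesis
    unfolding layout_fun_def length_Cons sum.lessThan_Suc_shift by simp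
qed

lemma lsize_Nil [simp]: "lsize [] = 1"
  and lsize_Cons [simp]: "lsize (m # L) = fst m * lsize L"
  and lsize_append: "lsize (L @ L') = lsize L * lsize L'"
  by (simp_all add: lsize_def)

lemma lsize_mset: "mset L = mset L' \<Longrightarrow> lsize L = lsize L'"
  by (metis lsize_def mset_map prod_mset_prod_list)

lemma lsize_squeeze: "lsize (squeeze L) = lsize L"
  by (induction L) (auto simp: squeeze_def)

lemma lsize_pos: "flat_layout L \<Longrightarrow> 0 < lsize L"
  by (induction L) (auto simp: flat_layout_def)

section \<open>Offsets of a layout\<close>

definition add_mode :: "nat \<times> nat \<Rightarrow> nat set \<Rightarrow> nat set" where
  "add_mode m Y = (\<lambda>(a, y). a * snd m + y) ` ({0..<fst m} \<times> Y)"

lemma mem_add_mode: "z \<in> add_mode (s, d) Y \<longleftrightarrow> (\<exists>a<s. \<exists>y\<in>Y. z = a * d + y)"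
  by (auto simp: add_mode_def)

lemma add_modeI: "a < s \<Longrightarrow> y \<in> Y \<Longrightarrow> a * d + y \<in> add_mode (s, d) Y"
  by (auto simp: mem_add_mode)

lemma add_modeE:
  assumes "z \<in> add_mode (s, d) Y"
  obtains a y where "a < s" "y \<in> Y" "z = a * d + y"
  using assms by (auto simp: mem_add_mode)

lemma add_mode_one [simp]: "add_mode (Suc 0, d) Y = Y"
  by (auto simp: mem_add_mode set_eq_iff)

lemma add_mode_swap_subset: "add_mode (s, d) (add_mode (t, e) Y) \<subseteq> add_mode (t, e) (add_mode (s, d) Y)"
proof
  fix z
  assume "z \<in> add_mode (s, d) (add_mode (t, e) Y)"
  then obtain a x where "a < s" "x \<in> add_mode (t, e) Y" "z = a * d + x"
    by (rule add_modeE)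
  moreover from \<open>x \<in> add_mode (t, e) Y\<close> obtain b y where "b < t" "y \<in> Y" "x = b * e + y"
    by (rule add_modeE)
  ultimately have "z = b * e + (a * d + y)" and "a * d + y \<in> add_mode (s, d) Y"
    by (auto intro: add_modeI)
  with \<open>b < t\<close> show "z \<in> add_mode (t, e) (add_mode (s, d) Y)"
    by (auto intro: add_modeI)
qed

lemma comp_fun_commute_add_mode: "comp_fun_commute add_mode"
proof
  fix m m' :: "nat \<times> nat"
  show "add_mode m \<circ> add_mode m' = add_mode m' \<circ> add_mode m"
    by (cases m; cases m') (simp add: fun_eq_iff subset_antisym add_mode_swap_subset)
qed

(* The set of offsets \<Sum> a\<^sub>i d\<^sub>i with a\<^sub>i < s\<^sub>i, i.e. the image of layout_fun
   (image_layout_fun); folding over the multiset of modes makes it permutation invariant. *)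
definition layout_img :: "layout \<Rightarrow> nat set" where
  "layout_img L = fold_mset add_mode {0} (mset L)"

lemma layout_img_Nil [simp]: "layout_img [] = {0}"
  by (simp add: layout_img_def)

lemma layout_img_Cons [simp]: "layout_img (m # L) = add_mode m (layout_img L)"
  by (simp add: layout_img_def comp_fun_commute.fold_mset_add_mset[OF comp_fun_commute_add_mode])

lemma layout_img_mset: "mset L = mset L' \<Longrightarrow> layout_img L = layout_img L'"
  by (simp add: layout_img_def)

lemma layout_img_squeeze: "layout_img (squeeze L) = layout_img L"
proof (induction L)
  case (Cons m L)
  then show ?case by (cases m) (simp add: squeeze_def)
qed (simp add: squeeze_def)

lemma finite_layout_img [simp]: "finite (layout_img L)"
  by (induction L) (auto simp: add_mode_def)

lemma zero_in_layout_img: "flat_layout L \<Longrightarrow> 0 \<in> layout_img L"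
  by (induction L) (force simp: flat_layout_def mem_add_mode)+

lemma image_layout_fun: "flat_layout L \<Longrightarrow> layout_fun L ` {0..<lsize L} = layout_img L"
proof (induction L)
  case Nil
  then show ?case by simp
next
  case (Cons m L)
  obtain s d where m: "m = (s, d)" by force
  have "0 < s" and IH: "layout_fun L ` {0..<lsize L} = layout_img L"
    using Cons by (auto simp: flat_layout_def m)
  have "z \<in> layout_fun (m # L) ` {0..<s * lsize L} \<longleftrightarrow>
      (\<exists>a<s. \<exists>w<lsize L. z = a * d + layout_fun L w)" for z
  proof
    assume "z \<in> layout_fun (m # L) ` {0..<s * lsize L}"
    then obtain x where x: "x < s * lsize L" "z = layout_fun (m # L) x" by auto
    then have "x div s < lsize L"
      by (simp add: less_mult_imp_div_less mult.commute)
    moreover have "x mod s < s" using \<open>0 < s\<close> by simp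
    ultimately show "\<exists>a<s. \<exists>w<lsize L. z = a * d + layout_fun L w"
      using x m by auto
  next
    assume "\<exists>a<s. \<exists>w<lsize L. z = a * d + layout_fun L w"
    then obtain a w where "a < s" "w < lsize L" "z = a * d + layout_fun L w" by blast
    moreover have "a + s * w < s * lsize L"
    proof -
      have "a + s * w < s * Suc w" using \<open>a < s\<close> by simp
      also have "\<dots> \<le> s * lsize L" using \<open>w < lsize L\<close> by (intro mult_le_mono2) simp
      finally show ?thesis .
    qed
    ultimately show "z \<in> layout_fun (m # L) ` {0..<s * lsize L}"
      by (intro image_eqI[where x = "a + s * w"]) (auto simp: m)
  qed
  moreover have "z \<in> layout_img (m # L) \<longleftrightarrow> (\<exists>a<s. \<exists>w<lsize L. z = a * d + layout_fun L w)" for z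
    by (simp add: m mem_add_mode IH[symmetric] Bex_def)
  ultimately show ?case
    by (simp add: set_eq_iff m del: layout_fun_Cons layout_img_Cons)
qed

lemma card_add_mode_le: "finite Y \<Longrightarrow> card (add_mode (s, d) Y) \<le> s * card Y"
  unfolding add_mode_def using card_image_le[of "{0..<s} \<times> Y"] by (simp add: card_cartesian_product)

lemma card_layout_img_le: "card (layout_img L) \<le> lsize L"
proof (induction L)
  case Nil
  then show ?case by simp
next
  case (Cons m L)
  obtain s d where m: "m = (s, d)" by force
  have "card (layout_img (m # L)) \<le> s * card (layout_img L)"
    using card_add_mode_le by (simp add: m)
  also have "\<dots> \<le> s * lsize L"
    using Cons.IH by simp
  finally show ?case by (simp add: m)
qed

lemma card_layout_img_Cons_eq:
  assumes card: "card (layout_img ((s, d) # L)) = lsize ((s, d) # L)" and "0 < s"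
  shows "card (layout_img L) = lsize L"
    and "inj_on (\<lambda>(a, y). a * d + y) ({0..<s} \<times> layout_img L)"
proof -
  have "s * lsize L \<le> s * card (layout_img L)"
    using card card_add_mode_le[of "layout_img L" s d] by simp
  then show card_L: "card (layout_img L) = lsize L"
    using card_layout_img_le[of L] \<open>0 < s\<close> by simp
  have "card ((\<lambda>(a, y). a * d + y) ` ({0..<s} \<times> layout_img L)) = card ({0..<s} \<times> layout_img L)"
    using card card_L by (simp add: add_mode_def card_cartesian_product)
  then show "inj_on (\<lambda>(a, y). a * d + y) ({0..<s} \<times> layout_img L)"
    by (simp add: eq_card_imp_inj_on)
qed

lemma compact_layout_img:
  assumes "flat_layout L" "compact L"
  shows "layout_img L = {0..<lsize L}" and "card (layout_img L) = lsize L"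
proof -
  have bij: "bij_betw (layout_fun L) {0..<lsize L} {0..<lcosize L}"
    using assms(2) by (simp add: compact_def)
  then have "lsize L = lcosize L"
    using bij_betw_same_card by fastforce
  with bij show "layout_img L = {0..<lsize L}"
    using image_layout_fun[OF assms(1)] by (simp add: bij_betw_def)
  then show "card (layout_img L) = lsize L" by simp
qed

section \<open>Compact sorted layouts are column-major\<close>

lemma direct_sum_interval_mem_iff_dvd:
  fixes T :: "nat set"
  assumes "0 < s"
    and sum: "(\<lambda>(a, t). a + t) ` ({0..<s} \<times> T) = {0..<n}"
    and inj: "inj_on (\<lambda>(a, t). a + t) ({0..<s} \<times> T)"
    and "x < n"
  shows "x \<in> T \<longleftrightarrow> s dvd x"
  using \<open>x < n\<close>
proof (induction x rule: less_induct)
  case (less x)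
  have unique: "a = a'" if "a < s" "a' < s" "t \<in> T" "t' \<in> T" "a + t = a' + t'" for a a' t t'
    using inj_onD[OF inj, of "(a, t)" "(a', t')"] that by simp
  show ?case
  proof
    assume "x \<in> T"
    show "s dvd x"
    proof (rule ccontr)
      assume "\<not> s dvd x"
      then have "0 < x mod s" by (simp add: dvd_eq_mod_eq_0)
      then have "x - x mod s < x"
        using mod_less_eq_dividend[of x s] by linarith
      then have "x - x mod s \<in> T"
        using less by (simp add: minus_mod_eq_mult_div)
      moreover have "x mod s + (x - x mod s) = 0 + x" by simp
      ultimately have "x mod s = 0"
        using unique[of "x mod s" 0 "x - x mod s" x] \<open>x \<in> T\<close> \<open>0 < s\<close> by simp
      with \<open>0 < x mod s\<close> show False by simp
    qed
  next
    assume "s dvd x"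
    have "x \<in> (\<lambda>(a, t). a + t) ` ({0..<s} \<times> T)"
      using sum less.prems by simp
    then obtain a t where "a < s" "t \<in> T" "x = a + t" by auto
    show "x \<in> T"
    proof (cases "a = 0")
      case True
      with \<open>t \<in> T\<close> \<open>x = a + t\<close> show ?thesis by simp
    next
      case False
      then have "s dvd t" using less \<open>t \<in> T\<close> \<open>x = a + t\<close> by auto
      with \<open>s dvd x\<close> \<open>x = a + t\<close> have "s dvd a" by (simp add: dvd_add_left_iff)
      with \<open>a < s\<close> False show ?thesis by (simp add: nat_dvd_not_less)
    qed
  qed
qed

lemma direct_sum_interval_eq_multiples:
  fixes T :: "nat set"
  assumes "0 < s"
    and sum: "(\<lambda>(a, t). a + t) ` ({0..<s} \<times> T) = {0..<n}"
    and inj: "inj_on (\<lambda>(a, t). a + t) ({0..<s} \<times> T)"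
  shows "T = {t. t < n \<and> s dvd t}"
proof -
  have "t < n" if "t \<in> T" for t
    using sum that \<open>0 < s\<close> by force
  with direct_sum_interval_mem_iff_dvd[OF assms] show ?thesis by blast
qed

lemma layout_img_zero_or_ge:
  assumes "\<forall>m\<in>set L. d \<le> snd m" and "y \<in> layout_img L"
  shows "y = 0 \<or> d \<le> y"
  using assms
proof (induction L arbitrary: y)
  case Nil
  then show ?case by simp
next
  case (Cons m L)
  obtain s e where m: "m = (s, e)" by force
  from Cons.prems(2) obtain a z where "z \<in> layout_img L" "y = a * e + z"
    unfolding m layout_img_Cons by (rule add_modeE)
  moreover have "d \<le> e" using Cons.prems(1) m by auto
  moreover have "z = 0 \<or> d \<le> z" using Cons \<open>z \<in> layout_img L\<close> by simp
  moreover have "a = 0 \<or> e \<le> a * e" by (cases a) auto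
  ultimately show ?case by (metis add_0 le_add1 le_trans mult_0)
qed

lemma head_stride_of_exact_img:
  assumes strides: "\<forall>m\<in>set L. d \<le> snd m" and "flat_layout L" "2 \<le> s" "0 < k" "1 < n"
    and img: "layout_img ((s, d) # L) = (*) k ` {0..<n}"
    and inj: "inj_on (\<lambda>(a, y). a * d + y) ({0..<s} \<times> layout_img L)"
  shows "d = k"
proof (rule antisym)
  have zero: "0 \<in> layout_img L"
    using \<open>flat_layout L\<close> by (rule zero_in_layout_img)
  have "d \<in> layout_img ((s, d) # L)"
    using add_modeI[of 1 s 0 "layout_img L" d] zero \<open>2 \<le> s\<close> by simp
  then obtain x where "d = k * x" using img by auto
  moreover have "d \<noteq> 0"
  proof
    assume "d = 0"
    then have "(0, 0) = (1 :: nat, 0 :: nat)"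
      using inj_onD[OF inj, of "(0, 0)" "(1, 0)"] zero \<open>2 \<le> s\<close> by simp
    then show False by simp
  qed
  ultimately show "k \<le> d" by simp
  have "k \<in> layout_img ((s, d) # L)"
    using img \<open>1 < n\<close> by (auto intro: image_eqI[where x = 1])
  then obtain a y where "y \<in> layout_img L" "k = a * d + y"
    unfolding layout_img_Cons by (rule add_modeE)
  moreover have "y = 0 \<or> d \<le> y"
    using layout_img_zero_or_ge[OF strides \<open>y \<in> layout_img L\<close>] .
  moreover have "a = 0 \<or> d \<le> a * d" by (cases a) auto
  ultimately show "d \<le> k" using \<open>0 < k\<close> by fastforce
qed

lemma tail_img_of_exact_img:
  assumes "0 < k" "0 < s"
    and img: "layout_img ((s, k) # L) = (*) k ` {0..<s * P}"
    and inj: "inj_on (\<lambda>(a, y). a * k + y) ({0..<s} \<times> layout_img L)"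
  shows "layout_img L = (*) (s * k) ` {0..<P}"
proof -
  define T where "T = {t. k * t \<in> layout_img L}"
  have "y \<in> range ((*) k)" if "y \<in> layout_img L" for y
  proof -
    have "0 * k + y \<in> layout_img ((s, k) # L)"
      using add_modeI[OF \<open>0 < s\<close> that] by simp
    then show ?thesis using img by auto
  qed
  then have img_L: "layout_img L = (*) k ` T"
    unfolding T_def by auto
  have "(*) k ` ((\<lambda>(a, t). a + t) ` ({0..<s} \<times> T)) = layout_img ((s, k) # L)"
    by (auto simp: img_L mem_add_mode image_iff algebra_simps; force)
  then have sum: "(\<lambda>(a, t). a + t) ` ({0..<s} \<times> T) = {0..<s * P}"
    using img inj_image_eq_iff[of "(*) k"] \<open>0 < k\<close> by (simp add: inj_def)
  have "a = a' \<and> t = t'"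
    if "a < s" "t \<in> T" "a' < s" "t' \<in> T" "a + t = a' + t'" for a t a' t'
  proof -
    have "a * k + k * t = a' * k + k * t'"
      using \<open>a + t = a' + t'\<close> by (metis add_mult_distrib mult.commute)
    then have "(a, k * t) = (a', k * t')"
      using inj_onD[OF inj, of "(a, k * t)" "(a', k * t')"] that by (simp add: T_def)
    then show ?thesis using \<open>0 < k\<close> by simp
  qed
  then have "inj_on (\<lambda>(a, t). a + t) ({0..<s} \<times> T)"
    by (auto simp: inj_on_def)
  with \<open>0 < s\<close> sum have "T = {t. t < s * P \<and> s dvd t}"
    by (rule direct_sum_interval_eq_multiples)
  also have "\<dots> = (*) s ` {0..<P}"
    using \<open>0 < s\<close> by (auto elim!: dvdE)
  finally show ?thesis
    by (simp add: img_L image_image ac_simps)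
qed

fun col_major :: "nat \<Rightarrow> layout \<Rightarrow> bool" where
  "col_major k [] \<longleftrightarrow> True"
| "col_major k ((s, d) # L) \<longleftrightarrow> d = k \<and> col_major (s * k) L"

lemma col_major_of_exact_img:
  assumes "sorted (map snd L)" "\<forall>m\<in>set L. 2 \<le> fst m" "0 < k"
    and "layout_img L = (*) k ` {0..<lsize L}" "card (layout_img L) = lsize L"
  shows "col_major k L"
  using assms
proof (induction L arbitrary: k)
  case Nil
  then show ?case by simp
next
  case (Cons m L)
  obtain s d where m: "m = (s, d)" by force
  have "2 \<le> s" and shapes: "\<forall>m\<in>set L. 2 \<le> fst m" and "flat_layout L"
    using Cons.prems(2) by (auto simp: m flat_layout_def)
  have sorted: "sorted (map snd L)" and strides: "\<forall>m\<in>set L. d \<le> snd m"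
    using Cons.prems(1) by (auto simp: m)
  have card: "card (layout_img L) = lsize L"
    and inj: "inj_on (\<lambda>(a, y). a * d + y) ({0..<s} \<times> layout_img L)"
    using card_layout_img_Cons_eq[of s d L] Cons.prems(5) \<open>2 \<le> s\<close> by (simp_all add: m)
  have "1 < s * lsize L"
    using mult_le_mono[OF \<open>2 \<le> s\<close>, of 1 "lsize L"] lsize_pos[OF \<open>flat_layout L\<close>] by simp
  then have "d = k"
    using head_stride_of_exact_img[OF strides \<open>flat_layout L\<close> \<open>2 \<le> s\<close> \<open>0 < k\<close>] Cons.prems(4) inj
    by (simp add: m)
  then have "layout_img L = (*) (s * k) ` {0..<lsize L}"
    using tail_img_of_exact_img[of k s L "lsize L"] Cons.prems(3,4) \<open>2 \<le> s\<close> inj by (simp add: m)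
  then have "col_major (s * k) L"
    using Cons.IH sorted shapes \<open>0 < k\<close> \<open>2 \<le> s\<close> card by simp
  then show ?case by (simp add: m \<open>d = k\<close>)
qed

lemma squeeze_shapes_ge_two: "flat_layout L \<Longrightarrow> \<forall>m\<in>set (squeeze L). 2 \<le> fst m"
  by (fastforce simp: flat_layout_def squeeze_def)

lemma col_major_of_compact:
  assumes "flat_layout M" "compact M"
    and mset_L: "mset L = mset (squeeze M)" and "sorted (map snd L)"
  shows "col_major 1 L"
proof (rule col_major_of_exact_img)
  show "\<forall>m\<in>set L. 2 \<le> fst m"
    using squeeze_shapes_ge_two[OF \<open>flat_layout M\<close>] mset_L by (metis set_mset_mset)
  have "layout_img L = layout_img M" and "lsize L = lsize M"
    using layout_img_mset[OF mset_L] lsize_mset[OF mset_L] by (simp_all add: layout_img_squeeze lsize_squeeze)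
  with compact_layout_img[OF assms(1,2)]
  show "layout_img L = (*) 1 ` {0..<lsize L}" and "card (layout_img L) = lsize L"
    by simp_all
qed (use assms in simp_all)

section \<open>Uniqueness of the sorted coalesced complement\<close>

lemma sorted_snd_eq_Cons_least:
  assumes "sorted (map snd X)" "m \<in> set X" "\<forall>x\<in>set X. x \<noteq> m \<longrightarrow> snd m < snd x"
  shows "X = m # tl X"
  using assms by (cases X) auto

lemma mset_split_least:
  assumes mset: "mset (m # L) = mset A + mset B" and "sorted (map snd A)" "sorted (map snd B)"
    and least: "\<forall>r\<in>set L. snd m < snd r"
  obtains A' where "A = m # A'" "mset L = mset A' + mset B"
    | B' where "B = m # B'" "mset L = mset A + mset B'"
proof -
  have set: "set (m # L) = set A \<union> set B"
    using mset by (metis set_mset_mset set_mset_union)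
  then have "\<forall>x\<in>set A. x \<noteq> m \<longrightarrow> snd m < snd x" and "\<forall>x\<in>set B. x \<noteq> m \<longrightarrow> snd m < snd x"
    using least by auto
  then have "m \<in> set A \<Longrightarrow> A = m # tl A" and "m \<in> set B \<Longrightarrow> B = m # tl B"
    using sorted_snd_eq_Cons_least assms(2,3) by blast+
  moreover have "m \<in> set A \<or> m \<in> set B"
    using set by auto
  ultimately consider "A = m # tl A" | "B = m # tl B"
    by blast
  then show thesis
  proof cases
    case 1
    with mset have "mset L = mset (tl A) + mset B"
      by (metis add_mset_add_mset_same_iff mset.simps(2) union_mset_add_mset_left)
    with 1 show thesis by (rule that(1))
  next
    case 2
    with mset have "mset L = mset A + mset (tl B)"
      by (metis add_mset_add_mset_same_iff mset.simps(2) union_mset_add_mset_right)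
    with 2 show thesis by (rule that(2))
  qed
qed

fun merge_free :: "layout \<Rightarrow> bool" where
  "merge_free ((s, d) # (s', d') # L) \<longleftrightarrow> d' \<noteq> s * d \<and> merge_free ((s', d') # L)"
| "merge_free _ \<longleftrightarrow> True"

lemma merge_modes_merge_free: "merge_free L \<Longrightarrow> merge_modes L = L"
  by (induction L rule: merge_modes.induct) auto

lemma merge_free_iff_nth:
  "merge_free L \<longleftrightarrow> (\<forall>i. Suc i < length L \<longrightarrow> fst (L ! i) * snd (L ! i) \<noteq> snd (L ! Suc i))"
proof (induction L rule: merge_free.induct)
  case (1 s d s' d' L)
  then show ?case
    by (auto simp: All_less_Suc2)
qed auto

fun comp_rec :: "nat \<Rightarrow> layout \<Rightarrow> nat \<Rightarrow> layout" where
  "comp_rec k [] N = [(N div k, k)]"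
| "comp_rec k ((s, d) # A) N = (d div k, k) # comp_rec (s * d) A N"

lemma comp_C_eq_comp_rec: "comp_C N A = comp_rec 1 (sort_layout (squeeze A)) N"
proof -
  have "map2 (\<lambda>a b. (a div b, b)) (map snd S @ [N]) (k # map (\<lambda>(s, d). s * d) S) = comp_rec k S N"
    for k S by (induction S arbitrary: k) auto
  then show ?thesis by (simp add: comp_C_def)
qed

lemma col_major_strides_ge:
  "col_major k L \<Longrightarrow> \<forall>m\<in>set L. 0 < fst m \<Longrightarrow> \<forall>m\<in>set L. k \<le> snd m"
proof (induction L arbitrary: k)
  case (Cons m L)
  obtain s where m: "m = (s, k)" and "0 < s" "col_major (s * k) L"
    using Cons.prems by (cases m) auto
  then have "\<forall>m\<in>set L. s * k \<le> snd m" using Cons by auto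
  with \<open>0 < s\<close> show ?case by (auto simp: m intro: le_trans[of k "s * k"])
qed simp

lemma col_major_Cons_least:
  assumes "col_major k (m # L)" "0 < k" "\<forall>m\<in>set (m # L). 2 \<le> fst m"
  shows "\<forall>r\<in>set L. snd m < snd r"
proof -
  obtain s where m: "m = (s, k)" and "2 \<le> s" and "col_major (s * k) L"
    using assms(1,3) by (cases m) auto
  then have "\<forall>r\<in>set L. s * k \<le> snd r"
    using col_major_strides_ge[of "s * k" L] assms(3) by fastforce
  moreover have "k < s * k" using \<open>2 \<le> s\<close> \<open>0 < k\<close> by simp
  ultimately show ?thesis
    unfolding m snd_conv using less_le_trans by blast
qed

lemma squeeze_comp_rec_step:
  assumes "0 < k" "2 \<le> s"
  shows "squeeze (comp_rec k ((t, s * k) # A) N) = (s, k) # squeeze (comp_rec (s * k) ((t, s * k) # A) N)"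
  using assms by (simp add: squeeze_def)

lemma col_major_split_eq_comp_rec:
  assumes "col_major k L" "0 < k" "\<forall>m\<in>set L. 2 \<le> fst m"
    and "mset L = mset A + mset B" "sorted (map snd A)" "sorted (map snd B)" "merge_free B"
  shows "B = squeeze (comp_rec k A (k * lsize L))"
  using assms
proof (induction L arbitrary: k A B)
  case Nil
  then show ?case by (simp add: squeeze_def)
next
  case (Cons m L)
  obtain s where m: "m = (s, k)" and "2 \<le> s" and col_L: "col_major (s * k) L"
    using Cons.prems(1,3) by (cases m) auto
  have "0 < s * k" using \<open>2 \<le> s\<close> \<open>0 < k\<close> by simp
  have shapes: "\<forall>m\<in>set L. 2 \<le> fst m" using Cons.prems(3) by simp
  have size: "k * lsize (m # L) = s * k * lsize L" by (simp add: m)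
  from Cons.prems(4,5,6) col_major_Cons_least[OF Cons.prems(1-3)] show ?case
  proof (cases rule: mset_split_least)
    case A_head: (1 A')
    then have "B = squeeze (comp_rec (s * k) A' (s * k * lsize L))"
      using Cons.IH[OF col_L \<open>0 < s * k\<close> shapes] Cons.prems(5-7) by simp
    then show ?thesis
      unfolding A_head(1) size using \<open>0 < k\<close> by (simp add: m squeeze_def)
  next
    case B_head: (2 B')
    have "sorted (map snd B')" "merge_free B'"
      using Cons.prems(6,7) B_head(1) by (auto elim: merge_free.elims)
    with B_head have B': "B' = squeeze (comp_rec (s * k) A (s * k * lsize L))"
      using Cons.IH[OF col_L \<open>0 < s * k\<close> shapes] Cons.prems(5) by simp
    show ?thesis
    proof (cases L)
      case Nil
      with B_head have "A = []" "B = [m]" by simp_all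
      with \<open>2 \<le> s\<close> \<open>0 < k\<close> Nil show ?thesis by (simp add: m squeeze_def)
    next
      case L: (Cons m' L')
      with col_L obtain t where m': "m' = (t, s * k)" by (cases m') auto
      from B_head(2)[unfolded L] Cons.prems(5) \<open>sorted (map snd B')\<close>
        col_major_Cons_least[OF col_L[unfolded L] \<open>0 < s * k\<close> shapes[unfolded L]]
      show ?thesis
      proof (cases rule: mset_split_least)
        case A_next: (1 A')
        have "squeeze (comp_rec k A (k * lsize (m # L))) = (s, k) # squeeze (comp_rec (s * k) A (s * k * lsize L))"
          unfolding A_next(1) m' size by (rule squeeze_comp_rec_step[OF \<open>0 < k\<close> \<open>2 \<le> s\<close>])
        with B' B_head(1) show ?thesis by (simp add: m)
      next
        case B_next: (2 B'')
        with B_head(1) Cons.prems(7) show ?thesis by (simp add: m m')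
      qed
    qed
  qed
qed

lemma sorted_snd_sort_layout: "sorted (map snd (sort_layout L))"
proof -
  have "sorted (map (\<lambda>(s, d). (d, s)) (sort_layout L))"
    unfolding sort_layout_def by (rule sorted_sort_key)
  then show ?thesis
    unfolding sorted_map by (rule sorted_wrt_mono_rel[rotated]) auto
qed

lemma sorted_snd_if_sorted_layout: "sorted_layout L \<Longrightarrow> sorted (map snd L)"
  by (auto simp: sorted_layout_def mode_le_def sorted_iff_nth_Suc)

lemma merge_free_if_coalesced: "coalesced L \<Longrightarrow> merge_free L"
  by (simp add: coalesced_def merge_free_iff_nth)

lemma squeeze_coalesced: "coalesced L \<Longrightarrow> squeeze L = L"
  by (auto simp: coalesced_def squeeze_def in_set_conv_nth intro!: filter_True) (metis fst_conv)

lemma sorted_merge_of_complement: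
  assumes "flat_layout A" "flat_layout B" "is_complement N A B" "coalesced B"
  defines "L \<equiv> sort_key snd (sort_layout (squeeze A) @ B)"
  shows "col_major 1 L" and "\<forall>m\<in>set L. 2 \<le> fst m" and "lsize L = N"
    and "mset L = mset (sort_layout (squeeze A)) + mset B"
proof -
  have "compact (A @ B)" and size: "lsize A * lsize B = N"
    using assms(3) by (simp_all add: is_complement_def)
  have flat: "flat_layout (A @ B)"
    using assms(1,2) by (auto simp: flat_layout_def)
  show mset_L: "mset L = mset (sort_layout (squeeze A)) + mset B"
    by (simp add: L_def)
  also have "\<dots> = mset (squeeze (A @ B))"
    using squeeze_coalesced[OF assms(4)] by (simp add: sort_layout_def squeeze_def)
  finally have mset_AB: "mset L = mset (squeeze (A @ B))" .
  show "col_major 1 L"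
    using col_major_of_compact[OF flat \<open>compact (A @ B)\<close> mset_AB] by (simp add: L_def)
  show "\<forall>m\<in>set L. 2 \<le> fst m"
    using squeeze_shapes_ge_two[OF flat] mset_AB by (metis set_mset_mset)
  show "lsize L = N"
    using lsize_mset[OF mset_AB] size by (simp add: lsize_squeeze lsize_append)
qed

theorem mainTheorem15:
  fixes N :: nat and A B :: layout
  assumes "0 < N"
    and "flat_layout A"
    and "complementable N A"
    and "flat_layout B"
    and "is_complement N A B"
    and "coalesced B"
    and "sorted_layout B"
  shows "B = comp_flat A N"
proof -
  note L = sorted_merge_of_complement[OF assms(2,4,5,6)]
  have merge_free: "merge_free B"
    using assms(6) by (rule merge_free_if_coalesced)
  have "B = squeeze (comp_rec 1 (sort_layout (squeeze A)) N)"
    using col_major_split_eq_comp_rec[OF L(1) _ L(2,4)] L(3) merge_free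
      sorted_snd_sort_layout sorted_snd_if_sorted_layout[OF assms(7)] by simp
  then have "B = squeeze (comp_C N A)"
    by (simp add: comp_C_eq_comp_rec)
  with merge_modes_merge_free[OF merge_free] show ?thesis
    by (simp add: comp_flat_def coal_flat_def)
qed

end
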